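(* Let $A_0(z)$ be the unique function holomorphic near $z=0$ with $A_0(0)=0$ and $z(1+A_0(z))^3=A_0(z)$, and define $A_{k}(z)$, $k\ge1$, recursively by the recurrence below. Define numbers $A_k[n]$ by $A_k(z)=(-1)^k\sum_{n=1}^\infty A_k[n]z^n$. Then for all $k\ge0$ and $n\ge1$, $A_k[n]$ is a positive integer, and $A_k[1]=1$.
   Context: With $\delta_z=z\frac{d}{dz}$, for $k\ge0$: $$A_{k+1}=\frac{1+A_0}{2A_0-1}\Bigl(\delta_z^2A_k+\sum_{i+j=k}\bigl(A_i\delta_z^2A_j-\delta_zA_i\,\delta_zA_j\bigr)-3z\!\!\sum_{\substack{i+j=k+1\\ i,j\le k}}\!\!A_iA_j-z\!\!\!\sum_{\substack{j_1+j_2+j_3=k+1\\ j_1,j_2,j_3\le k}}\!\!\!A_{j_1}A_{j_2}A_{j_3}\Bigr),$$ all indices nonnegative. Equivalently, $(A_k)_{k\ge0}$ is the unique sequence of functions holomorphic in $|z|<4/27$ such that $\sum_k A_k(z)a^{-2k}$ formally solves $a^2(z(1+A)^3-A)=(1+A)\delta_z^2A-(\delta_zA)^2$. *)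

theory Defs
  imports "HOL-Complex_Analysis.Complex_Analysis"
begin

definition euler_op :: "(complex \<Rightarrow> complex) \<Rightarrow> complex \<Rightarrow> complex" where
  "euler_op f = (\<lambda>z. z * deriv f z)"

text \<open>One step of the recurrence: given A_0,...,A_k (as the function B restricted to indices \<le> k),
  produce A_(k+1).\<close>
definition rec_step :: "(nat \<Rightarrow> complex \<Rightarrow> complex) \<Rightarrow> nat \<Rightarrow> complex \<Rightarrow> complex" where
  "rec_step B k = (\<lambda>z. (1 + B 0 z) / (2 * B 0 z - 1) *
      ( euler_op (euler_op (B k)) z
      + (\<Sum>i\<le>k. B i z * euler_op (euler_op (B (k - i))) z
                  - euler_op (B i) z * euler_op (B (k - i)) z)
      - 3 * z * (\<Sum>(i, j) \<in> {(i, j). i + j = k + 1 \<and> i \<le> k \<and> j \<le> k}. B i z * B j z)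
      - z * (\<Sum>(j1, j2, j3) \<in> {(j1, j2, j3). j1 + j2 + j3 = k + 1 \<and> j1 \<le> k \<and> j2 \<le> k \<and> j3 \<le> k}.
               B j1 z * B j2 z * B j3 z)))"

primrec A_list :: "(complex \<Rightarrow> complex) \<Rightarrow> nat \<Rightarrow> (complex \<Rightarrow> complex) list" where
  "A_list A0 0 = [A0]"
| "A_list A0 (Suc k) = A_list A0 k @ [rec_step (\<lambda>i. A_list A0 k ! i) k]"

definition A_seq :: "(complex \<Rightarrow> complex) \<Rightarrow> nat \<Rightarrow> complex \<Rightarrow> complex" where
  "A_seq A0 k = A_list A0 k ! k"

definition taylor_coeff :: "(complex \<Rightarrow> complex) \<Rightarrow> nat \<Rightarrow> complex" where
  "taylor_coeff f n = (deriv ^^ n) f 0 / fact n"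

end

theory Submission
  imports Defs
begin

(*
  Pass to formal power series and put B_k = (-1)^k A_k.  Every product of B's in the
  recurrence then carries the same sign, and it becomes
    (1 - 2 A_0) B_(k+1) = (1 + A_0) T_k,
    T_k = delta^2 B_k + sum (B_i delta^2 B_j - delta B_i delta B_j) + 3 z sum B_i B_j + z sum B_i B_j B_l.
  As 2 A_0 = 2 z (1 + A_0)^3, this is the fixpoint equation
    B_(k+1) = (1 + A_0) T_k + z * 2 (1 + A_0)^3 B_(k+1),
  which determines each coefficient from earlier ones by sums of products, so nonnegative
  integer coefficients propagate, provided T_k has them.  The only subtraction sits in the
  bilinear sum, whose n-th coefficient symmetrises to (1/2) sum b_i[p] b_j[n-p] (n - 2p)^2.
  Positivity comes from the term n^2 B_k[n] of delta^2 B_k, and A_0, the generating function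
  of ternary trees, is handled by the same fixpoint argument.
*)

unbundle no vec_syntax

definition nat_coeffs :: "'a::semiring_1 fps \<Rightarrow> bool" where
  "nat_coeffs F \<longleftrightarrow> (\<forall>n. F $ n \<in> \<nat>)"

definition nat_coeffs_upto :: "nat \<Rightarrow> 'a::semiring_1 fps \<Rightarrow> bool" where
  "nat_coeffs_upto m F \<longleftrightarrow> (\<forall>n\<le>m. F $ n \<in> \<nat>)"

lemma sum_in_Nats: "(\<And>x. x \<in> A \<Longrightarrow> f x \<in> \<nat>) \<Longrightarrow> sum f A \<in> (\<nat> :: 'a::semiring_1 set)"
  by (induction A rule: infinite_finite_induct) auto

lemma nat_coeffs_iff_upto: "nat_coeffs F \<longleftrightarrow> (\<forall>m. nat_coeffs_upto m F)"
  by (auto simp: nat_coeffs_def nat_coeffs_upto_def)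

lemma nat_coeffs_upto_one: "nat_coeffs_upto m 1"
  by (auto simp: nat_coeffs_upto_def)

lemma nat_coeffs_upto_add: "nat_coeffs_upto m F \<Longrightarrow> nat_coeffs_upto m G \<Longrightarrow> nat_coeffs_upto m (F + G)"
  by (auto simp: nat_coeffs_upto_def)

lemma nat_coeffs_upto_mult:
  fixes F G :: "'a::comm_semiring_1 fps"
  shows "nat_coeffs_upto m F \<Longrightarrow> nat_coeffs_upto m G \<Longrightarrow> nat_coeffs_upto m (F * G)"
  unfolding nat_coeffs_upto_def fps_mult_nth by (auto intro!: sum_in_Nats Nats_mult)

lemma nat_coeffs_upto_power:
  fixes F :: "'a::comm_semiring_1 fps"
  shows "nat_coeffs_upto m F \<Longrightarrow> nat_coeffs_upto m (F ^ j)"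
  by (induction j) (auto intro: nat_coeffs_upto_mult nat_coeffs_upto_one)

lemma nat_coeffs_upto_fps_X_mult: "nat_coeffs_upto m F \<Longrightarrow> nat_coeffs_upto (Suc m) (fps_X * F)"
  by (auto simp: nat_coeffs_upto_def)

lemma nat_coeffs_fixpoint:
  assumes Y: "Y = U + fps_X * \<Phi> Y" and U: "nat_coeffs U"
    and \<Phi>: "\<And>m. nat_coeffs_upto m Y \<Longrightarrow> nat_coeffs_upto m (\<Phi> Y)"
  shows "nat_coeffs Y"
proof -
  have "nat_coeffs_upto m Y" for m
  proof (induction m)
    case 0
    have "Y $ 0 = U $ 0" by (subst Y) simp
    then show ?case using U by (simp add: nat_coeffs_def nat_coeffs_upto_def)
  next
    case (Suc m)
    have "nat_coeffs_upto (Suc m) (U + fps_X * \<Phi> Y)"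
      using U Suc by (intro nat_coeffs_upto_add nat_coeffs_upto_fps_X_mult \<Phi>)
        (auto simp: nat_coeffs_iff_upto)
    then show ?case using Y by simp
  qed
  then show ?thesis by (simp add: nat_coeffs_iff_upto)
qed

lemma nat_coeffs_one: "nat_coeffs 1"
  by (auto simp: nat_coeffs_def)

lemma nat_coeffs_numeral: "nat_coeffs (numeral k)"
  by (auto simp: nat_coeffs_def fps_numeral_nth)

lemma nat_coeffs_fps_X: "nat_coeffs fps_X"
  by (auto simp: nat_coeffs_def fps_X_nth)

lemma nat_coeffs_add: "nat_coeffs F \<Longrightarrow> nat_coeffs G \<Longrightarrow> nat_coeffs (F + G)"
  by (auto simp: nat_coeffs_def)

lemma nat_coeffs_mult:
  fixes F G :: "'a::comm_semiring_1 fps"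
  shows "nat_coeffs F \<Longrightarrow> nat_coeffs G \<Longrightarrow> nat_coeffs (F * G)"
  by (simp add: nat_coeffs_iff_upto nat_coeffs_upto_mult)

lemma nat_coeffs_power:
  fixes F :: "'a::comm_semiring_1 fps"
  shows "nat_coeffs F \<Longrightarrow> nat_coeffs (F ^ j)"
  by (simp add: nat_coeffs_iff_upto nat_coeffs_upto_power)

lemma nat_coeffs_sum: "(\<And>x. x \<in> A \<Longrightarrow> nat_coeffs (f x)) \<Longrightarrow> nat_coeffs (sum f A)"
  by (auto simp: nat_coeffs_def fps_sum_nth intro!: sum_in_Nats)

lemma nat_coeffs_add_nth_nonzero:
  fixes F G :: "'a::semiring_char_0 fps"
  assumes "nat_coeffs F" "nat_coeffs G" "F $ n \<noteq> 0"
  shows "(F + G) $ n \<noteq> 0"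
proof -
  obtain a b where "F $ n = of_nat a" "G $ n = of_nat b"
    using assms(1,2) unfolding nat_coeffs_def by (meson Nats_cases)
  then show ?thesis using assms(3) by (simp flip: of_nat_add)
qed

definition fps_euler :: "'a::comm_semiring_1 fps \<Rightarrow> 'a fps" where
  "fps_euler F = fps_X * fps_deriv F"

lemma fps_euler_nth [simp]: "fps_euler F $ n = of_nat n * F $ n"
  by (cases n) (simp_all add: fps_euler_def)

lemma fps_euler_const_mult: "fps_euler (fps_const c * F) = fps_const c * fps_euler F"
  by (simp add: fps_euler_def algebra_simps)

lemma nat_coeffs_fps_euler: "nat_coeffs F \<Longrightarrow> nat_coeffs (fps_euler F)"
  by (auto simp: nat_coeffs_def)

lemma has_fps_expansion_euler_op:
  "f has_fps_expansion F \<Longrightarrow> euler_op f has_fps_expansion fps_euler F"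
  unfolding euler_op_def fps_euler_def
  by (intro has_fps_expansion_mult has_fps_expansion_fps_X has_fps_expansion_deriv)

lemma Nats_if_double_in_Nats:
  fixes x :: "'a::ring_char_0"
  assumes "2 * x \<in> \<nat>" "x \<in> \<int>"
  shows "x \<in> \<nat>"
proof -
  obtain m where m: "x = of_int m" using assms(2) by (auto elim: Ints_cases)
  obtain N where "2 * x = of_nat N" using assms(1) by (auto elim: Nats_cases)
  then have "of_int (2 * m) = (of_int (int N) :: 'a)" using m by simp
  then have "m \<ge> 0" by (simp only: of_int_eq_iff)
  then show ?thesis using m by (metis of_nat_in_Nats of_int_of_nat_eq nonneg_int_cases)
qed

text \<open>The degree-\<open>k\<close> part of \<open>B \<delta>\<^sup>2B - (\<delta>B)\<^sup>2\<close>, i.e. of the Hirota bilinear derivative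
  \<open>D\<^sup>2(B \<cdot> B) / 2\<close>, for \<open>B = \<Sum> B\<^sub>i a\<^sup>-\<^sup>2\<^sup>i\<close>.\<close>
definition hirota_sum :: "(nat \<Rightarrow> 'a::comm_ring_1 fps) \<Rightarrow> nat \<Rightarrow> 'a fps" where
  "hirota_sum B k =
     (\<Sum>i\<le>k. B i * fps_euler (fps_euler (B (k - i))) - fps_euler (B i) * fps_euler (B (k - i)))"

lemma nat_coeffs_hirota_sum:
  fixes B :: "nat \<Rightarrow> 'a::{comm_ring_1, ring_char_0} fps"
  assumes B: "\<And>i. i \<le> k \<Longrightarrow> nat_coeffs (B i)"
  shows "nat_coeffs (hirota_sum B k)"
  unfolding nat_coeffs_def
proof
  fix n :: nat
  define I where "I = {..k} \<times> {..n}"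
  define \<beta> :: "nat \<times> nat \<Rightarrow> 'a" where "\<beta> = (\<lambda>(i, p). B i $ p * B (k - i) $ (n - p))"
  define g :: "nat \<Rightarrow> 'a" where "g = (\<lambda>p. of_nat (n - p) * of_nat (n - p) - of_nat p * of_nat (n - p))"
  have \<beta>_Nats: "\<beta> x \<in> \<nat>" if "x \<in> I" for x
    using that B[of "fst x"] B[of "k - fst x"] unfolding I_def \<beta>_def nat_coeffs_def
    by (cases x) (simp add: Nats_mult)
  have "hirota_sum B k $ n = (\<Sum>i\<le>k. \<Sum>p\<le>n. \<beta> (i, p) * g p)"
    unfolding hirota_sum_def fps_sum_nth fps_sub_nth
    by (intro sum.cong refl)
      (simp add: fps_mult_nth atLeast0AtMost \<beta>_def g_def sum_subtractf[symmetric] algebra_simps)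
  also have "\<dots> = (\<Sum>x\<in>I. \<beta> x * g (snd x))"
    unfolding I_def sum.cartesian_product by (intro sum.cong refl) auto
  finally have coeff: "hirota_sum B k $ n = (\<Sum>x\<in>I. \<beta> x * g (snd x))" .
  \<comment> \<open>The involution \<open>(i, p) \<mapsto> (k - i, n - p)\<close> fixes \<open>\<beta>\<close>, and symmetrising \<open>g\<close> gives the square \<open>(n - 2 p)\<^sup>2\<close>.\<close>
  have swap: "(\<Sum>x\<in>I. \<beta> x * g (snd x)) = (\<Sum>x\<in>I. \<beta> x * g (n - snd x))"
    by (rule sum.reindex_bij_witness[of _ "\<lambda>(i, p). (k - i, n - p)" "\<lambda>(i, p). (k - i, n - p)"])
      (auto simp: I_def \<beta>_def mult.commute)
  have "2 * (\<Sum>x\<in>I. \<beta> x * g (snd x)) = (\<Sum>x\<in>I. \<beta> x * (g (snd x) + g (n - snd x)))"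
    by (subst mult_2, subst (2) swap) (simp add: sum.distrib algebra_simps)
  also have "\<dots> = (\<Sum>x\<in>I. \<beta> x * of_nat (nat ((int (n - snd x) - int (snd x))\<^sup>2)))"
  proof (intro sum.cong refl)
    fix x assume "x \<in> I"
    then obtain q where n: "n = snd x + q" by (auto simp: I_def dest: le_Suc_ex)
    have "g (snd x) + g (n - snd x) = (of_int ((int q - int (snd x))\<^sup>2) :: 'a)"
      unfolding g_def n by (simp add: power2_eq_square algebra_simps)
    then show "\<beta> x * (g (snd x) + g (n - snd x)) = \<beta> x * of_nat (nat ((int (n - snd x) - int (snd x))\<^sup>2))"
      using n by simp
  qed
  also have "\<dots> \<in> \<nat>"
    by (rule sum_in_Nats, rule Nats_mult, erule \<beta>_Nats, rule of_nat_in_Nats)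
  finally have "2 * (\<Sum>x\<in>I. \<beta> x * g (snd x)) \<in> \<nat>" .
  moreover have "(\<Sum>x\<in>I. \<beta> x * g (snd x)) \<in> \<int>"
  proof (intro Ints_sum Ints_mult)
    show "\<beta> x \<in> \<int>" if "x \<in> I" for x
      using \<beta>_Nats[OF that] Nats_subset_Ints by blast
    show "g (snd x) \<in> \<int>" for x
      unfolding g_def by (intro Ints_diff Ints_mult Ints_of_nat)
  qed
  ultimately show "hirota_sum B k $ n \<in> \<nat>"
    unfolding coeff by (rule Nats_if_double_in_Nats)
qed

definition pair_sum :: "(nat \<Rightarrow> 'a::comm_semiring_1 fps) \<Rightarrow> nat \<Rightarrow> 'a fps" where
  "pair_sum B k = (\<Sum>(i, j) \<in> {(i, j). i + j = k + 1 \<and> i \<le> k \<and> j \<le> k}. B i * B j)"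

definition triple_sum :: "(nat \<Rightarrow> 'a::comm_semiring_1 fps) \<Rightarrow> nat \<Rightarrow> 'a fps" where
  "triple_sum B k = (\<Sum>(j1, j2, j3) \<in> {(j1, j2, j3). j1 + j2 + j3 = k + 1 \<and> j1 \<le> k \<and> j2 \<le> k \<and> j3 \<le> k}.
     B j1 * B j2 * B j3)"

definition rec_step_fps :: "(nat \<Rightarrow> 'a::field fps) \<Rightarrow> nat \<Rightarrow> 'a fps" where
  "rec_step_fps G k = (1 + G 0) / (2 * G 0 - 1) *
     (fps_euler (fps_euler (G k)) + hirota_sum G k - 3 * fps_X * pair_sum G k - fps_X * triple_sum G k)"

lemma hirota_sum_scale:
  "hirota_sum (\<lambda>i. fps_const (c ^ i) * B i) k = fps_const (c ^ k) * hirota_sum B k"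
  unfolding hirota_sum_def sum_distrib_left
proof (intro sum.cong refl)
  fix i assume "i \<in> {..k}"
  then have c: "fps_const (c ^ k) = fps_const (c ^ i) * fps_const (c ^ (k - i))"
    by (simp flip: power_add fps_const_mult)
  show "fps_const (c ^ i) * B i * fps_euler (fps_euler (fps_const (c ^ (k - i)) * B (k - i)))
      - fps_euler (fps_const (c ^ i) * B i) * fps_euler (fps_const (c ^ (k - i)) * B (k - i))
    = fps_const (c ^ k) * (B i * fps_euler (fps_euler (B (k - i))) - fps_euler (B i) * fps_euler (B (k - i)))"
    unfolding c fps_euler_const_mult by (simp add: algebra_simps flip: fps_const_mult)
qed

lemma pair_sum_scale:
  "pair_sum (\<lambda>i. fps_const (c ^ i) * B i) k = fps_const (c ^ (k + 1)) * pair_sum B k"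
  unfolding pair_sum_def sum_distrib_left
  by (intro sum.cong refl) (auto simp: algebra_simps simp flip: power_add)

lemma triple_sum_scale:
  "triple_sum (\<lambda>i. fps_const (c ^ i) * B i) k = fps_const (c ^ (k + 1)) * triple_sum B k"
  unfolding triple_sum_def sum_distrib_left
  by (intro sum.cong refl) (auto simp: algebra_simps simp flip: power_add)

lemma rec_step_fps_scale:
  fixes B :: "nat \<Rightarrow> 'a::field fps"
  assumes "B 0 $ 0 = 0"
  shows "(2 * B 0 - 1) * rec_step_fps (\<lambda>i. fps_const (c ^ i) * B i) k
    = fps_const (c ^ k) * (1 + B 0) * (fps_euler (fps_euler (B k)) + hirota_sum B k
        - fps_const c * (3 * fps_X * pair_sum B k + fps_X * triple_sum B k))"
proof -
  have unit: "is_unit (2 * B 0 - 1)" using assms by (simp add: fps_is_unit_iff)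
  have cancel: "(2 * B 0 - 1) * ((1 + B 0) / (2 * B 0 - 1) * R) = (1 + B 0) * R" for R
  proof -
    have "(1 + B 0) / (2 * B 0 - 1) * R = (1 + B 0) * R div (2 * B 0 - 1)"
      by (metis unit unit_div_mult_swap mult.commute)
    then show ?thesis by (simp add: dvd_mult_div_cancel unit_imp_dvd[OF unit])
  qed
  have "rec_step_fps (\<lambda>i. fps_const (c ^ i) * B i) k = (1 + B 0) / (2 * B 0 - 1) *
      (fps_const (c ^ k) * (fps_euler (fps_euler (B k)) + hirota_sum B k
        - fps_const c * (3 * fps_X * pair_sum B k + fps_X * triple_sum B k)))"
    unfolding rec_step_fps_def hirota_sum_scale pair_sum_scale triple_sum_scale fps_euler_const_mult
    by (simp add: algebra_simps flip: fps_const_mult)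
  then show ?thesis
    by (simp only: cancel mult.assoc mult.left_commute[of "1 + B 0"])
qed

definition positive_series :: "'a::semiring_1 fps \<Rightarrow> bool" where
  "positive_series F \<longleftrightarrow> F $ 0 = 0 \<and> (\<forall>n\<ge>1. \<exists>m>0. F $ n = of_nat m)"

lemma positive_seriesI:
  fixes F :: "'a::semiring_1 fps"
  assumes "nat_coeffs F" "F $ 0 = 0" "\<And>n. n \<ge> 1 \<Longrightarrow> F $ n \<noteq> 0"
  shows "positive_series F"
  unfolding positive_series_def
proof (intro conjI assms(2) allI impI)
  fix n :: nat assume "n \<ge> 1"
  obtain m where "F $ n = of_nat m" using assms(1) unfolding nat_coeffs_def by (meson Nats_cases)
  with assms(3)[OF \<open>n \<ge> 1\<close>] show "\<exists>m>0. F $ n = of_nat m" by (metis gr0I of_nat_0)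
qed

lemma positive_series_imp_nat_coeffs: "positive_series F \<Longrightarrow> nat_coeffs F"
  unfolding positive_series_def nat_coeffs_def by (metis Nats_0 less_one not_le of_nat_in_Nats)

lemma positive_series_nth_nonzero:
  fixes F :: "'a::semiring_char_0 fps"
  shows "positive_series F \<Longrightarrow> n \<ge> 1 \<Longrightarrow> F $ n \<noteq> 0"
  unfolding positive_series_def by fastforce

lemma positive_series_recurrence_rhs:
  fixes B :: "nat \<Rightarrow> 'a::{comm_ring_1, ring_char_0} fps"
  assumes B: "\<And>i. i \<le> k \<Longrightarrow> positive_series (B i)"
  defines "T \<equiv> fps_euler (fps_euler (B k))
    + (hirota_sum B k + (3 * fps_X * pair_sum B k + fps_X * triple_sum B k))"
  shows "positive_series T" "T $ 1 = B k $ 1"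
proof -
  have nat_B: "nat_coeffs (B i)" if "i \<le> k" for i
    using B[OF that] by (rule positive_series_imp_nat_coeffs)
  have B_0: "B i $ 0 = 0" if "i \<le> k" for i
    using B[OF that] by (simp add: positive_series_def)
  have nat_tail: "nat_coeffs (hirota_sum B k + (3 * fps_X * pair_sum B k + fps_X * triple_sum B k))"
    unfolding pair_sum_def triple_sum_def
    by (intro nat_coeffs_add nat_coeffs_hirota_sum nat_coeffs_mult nat_coeffs_numeral nat_coeffs_fps_X
        nat_coeffs_sum) (auto intro!: nat_coeffs_mult nat_B)
  have nat_main: "nat_coeffs (fps_euler (fps_euler (B k)))"
    by (intro nat_coeffs_fps_euler nat_B) simp
  have hirota_0: "hirota_sum B k $ 0 = 0" and hirota_1: "hirota_sum B k $ 1 = 0"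
    unfolding hirota_sum_def fps_sum_nth
    by (intro sum.neutral ballI; simp add: fps_mult_nth_1 B_0)+
  have pair_0: "pair_sum B k $ 0 = 0"
    unfolding pair_sum_def fps_sum_nth by (intro sum.neutral) (auto simp: B_0)
  have triple_0: "triple_sum B k $ 0 = 0"
    unfolding triple_sum_def fps_sum_nth by (intro sum.neutral) (auto simp: B_0)
  show "T $ 1 = B k $ 1"
    using hirota_1 by (simp add: T_def pair_0 triple_0 mult.assoc numeral_fps_const)
  show "positive_series T"
  proof (rule positive_seriesI)
    show "nat_coeffs T" unfolding T_def by (rule nat_coeffs_add[OF nat_main nat_tail])
    show "T $ 0 = 0" by (simp add: T_def hirota_0)
    fix n :: nat assume "n \<ge> 1"
    then obtain m where "m > 0" "B k $ n = of_nat m"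
      using B[of k] by (auto simp: positive_series_def)
    with \<open>n \<ge> 1\<close> have "fps_euler (fps_euler (B k)) $ n \<noteq> 0"
      by (simp flip: of_nat_mult)
    then show "T $ n \<noteq> 0"
      unfolding T_def by (rule nat_coeffs_add_nth_nonzero[OF nat_main nat_tail])
  qed
qed

lemma positive_series_fixpoint:
  fixes F T V Y :: "'a::{comm_semiring_1, semiring_char_0} fps"
  assumes T: "positive_series T" and F: "nat_coeffs F" "F $ 0 = 0" and V: "nat_coeffs V"
    and Y: "Y = (1 + F) * T + fps_X * (V * Y)"
  shows "positive_series Y" "Y $ 1 = T $ 1"
proof -
  have T_0: "T $ 0 = 0" using T by (simp add: positive_series_def)
  have nat_T: "nat_coeffs T" using T by (rule positive_series_imp_nat_coeffs)
  have nat_Y: "nat_coeffs Y"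
  proof (rule nat_coeffs_fixpoint[of Y "(1 + F) * T" "\<lambda>Y. V * Y", OF Y])
    show "nat_coeffs ((1 + F) * T)"
      by (intro nat_coeffs_mult nat_coeffs_add nat_coeffs_one F nat_T)
    show "nat_coeffs_upto m (V * Y)" if "nat_coeffs_upto m Y" for m
      using V that by (simp add: nat_coeffs_iff_upto nat_coeffs_upto_mult)
  qed
  have Y_split: "Y = T + (F * T + fps_X * (V * Y))"
    using Y by (simp add: algebra_simps)
  have Y_0: "Y $ 0 = 0" by (subst Y_split) (simp add: T_0 F)
  show "Y $ 1 = T $ 1" by (subst Y_split) (simp add: fps_mult_nth_1 T_0 Y_0 F)
  show "positive_series Y"
  proof (rule positive_seriesI[OF nat_Y Y_0])
    fix n :: nat assume "n \<ge> 1"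
    with T have "T $ n \<noteq> 0" by (rule positive_series_nth_nonzero)
    then show "Y $ n \<noteq> 0"
      by (subst Y_split, intro nat_coeffs_add_nth_nonzero nat_T nat_coeffs_add nat_coeffs_mult
          nat_coeffs_fps_X F V nat_Y)
  qed
qed

lemma ternary_tree_series_positive:
  fixes F :: "'a::{comm_semiring_1, semiring_char_0} fps"
  assumes F: "F = fps_X * (1 + F) ^ 3"
  shows "positive_series F" "F $ 1 = 1"
proof -
  have nat_F: "nat_coeffs F"
  proof (rule nat_coeffs_fixpoint[of F 0 "\<lambda>F. (1 + F) ^ 3"])
    show "F = 0 + fps_X * (1 + F) ^ 3" using F by simp
    show "nat_coeffs (0 :: 'a fps)" by (simp add: nat_coeffs_def)
    show "nat_coeffs_upto m ((1 + F) ^ 3)" if "nat_coeffs_upto m F" for m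
      using that by (intro nat_coeffs_upto_power nat_coeffs_upto_add nat_coeffs_upto_one)
  qed
  have F_0: "F $ 0 = 0" by (subst F) simp
  have F_Suc: "F $ Suc n = ((1 + F) ^ 3) $ n" for n by (subst F) simp
  show "F $ 1 = 1" using F_Suc[of 0] by (simp add: F_0 fps_nth_power_0)
  have cube: "(1 + F) ^ 3 = (1 + F) + F * (1 + F) * (1 + (1 + F))"
    by (simp add: algebra_simps power3_eq_cube mult_2_right)
  have nat_rest: "nat_coeffs (F * (1 + F) * (1 + (1 + F)))"
    by (intro nat_coeffs_mult nat_coeffs_add nat_coeffs_one nat_F)
  have one_plus_F_nonzero: "(1 + F) $ n \<noteq> 0" for n
  proof (induction n)
    case (Suc n)
    have "((1 + F) ^ 3) $ n \<noteq> 0"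
      unfolding cube
      by (rule nat_coeffs_add_nth_nonzero[OF nat_coeffs_add[OF nat_coeffs_one nat_F] nat_rest Suc])
    then show ?case by (simp add: F_Suc)
  qed (simp add: F_0)
  show "positive_series F"
  proof (rule positive_seriesI[OF nat_F F_0])
    fix n :: nat assume "n \<ge> 1"
    then show "F $ n \<noteq> 0" using one_plus_F_nonzero[of n] by simp
  qed
qed

lemma rec_step_fps_alternating_positive:
  fixes G :: "nat \<Rightarrow> 'a::field_char_0 fps"
  assumes G_0: "G 0 = fps_X * (1 + G 0) ^ 3"
    and G_Suc: "\<And>k. G (Suc k) = rec_step_fps G k"
  shows "positive_series (fps_const ((-1) ^ k) * G k) \<and> (fps_const ((-1) ^ k) * G k) $ 1 = 1"
proof (induction k rule: less_induct)
  case (less k)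
  define B where "B i = fps_const ((-1) ^ i) * G i" for i
  have G_B: "G = (\<lambda>i. fps_const ((-1) ^ i) * B i)"
    by (simp add: B_def fun_eq_iff flip: fps_const_mult power_mult_distrib)
  define F where "F = B 0"
  have F: "F = fps_X * (1 + F) ^ 3" using G_0 by (simp add: F_def B_def)
  note F_pos = ternary_tree_series_positive[OF F]
  have F_0: "F $ 0 = 0" using F_pos(1) by (simp add: positive_series_def)
  show ?case
  proof (cases k)
    case 0
    then show ?thesis using F_pos by (simp add: F_def B_def)
  next
    case (Suc k')
    define T where "T = fps_euler (fps_euler (B k'))
      + (hirota_sum B k' + (3 * fps_X * pair_sum B k' + fps_X * triple_sum B k'))"
    have B_pos: "positive_series (B i)" "B i $ 1 = 1" if "i \<le> k'" for i
      using less[of i] that Suc by (auto simp: B_def)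
    note T_pos = positive_series_recurrence_rhs[of k' B, folded T_def, OF B_pos(1)]
    have rec: "(2 * F - 1) * G k = fps_const ((-1) ^ k') * (1 + F) * T"
      using rec_step_fps_scale[of B "-1" k'] F_0
      by (simp add: Suc G_Suc F_def T_def flip: G_B fps_const_neg)
    have sign_sq: "fps_const ((-1) ^ k') * fps_const ((-1) ^ k') = (1 :: 'a fps)"
      by (simp flip: fps_const_mult power_mult_distrib)
    have "(1 - 2 * F) * B k = fps_const ((-1) ^ k') * ((2 * F - 1) * G k)"
      by (simp add: B_def Suc algebra_simps flip: fps_const_neg)
    also have "\<dots> = (1 + F) * T"
      unfolding rec by (simp add: sign_sq flip: mult.assoc)
    finally have "B k = (1 + F) * T + 2 * F * B k"
      by (simp add: algebra_simps)
    \<comment> \<open>The factor \<open>1 / (1 - 2 F)\<close> turns into a fixpoint equation with coefficients in \<open>\<nat>\<close>,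
      because \<open>2 F = 2 X (1 + F)\<^sup>3\<close>.\<close>
    also have "2 * F * B k = fps_X * (2 * (1 + F) ^ 3 * B k)"
      by (subst F) (simp add: algebra_simps)
    finally have B_k: "B k = (1 + F) * T + fps_X * (2 * (1 + F) ^ 3 * B k)" .
    have nat_F: "nat_coeffs F" using F_pos(1) by (rule positive_series_imp_nat_coeffs)
    have "nat_coeffs (2 * (1 + F) ^ 3)"
      by (intro nat_coeffs_mult nat_coeffs_numeral nat_coeffs_power nat_coeffs_add nat_coeffs_one nat_F)
    from positive_series_fixpoint[OF T_pos(1) nat_F F_0 this B_k] show ?thesis
      using T_pos(2) B_pos(2)[of k'] by (simp add: B_def)
  qed
qed

lemma length_A_list: "length (A_list A0 k) = Suc k"
  by (induction k) auto

lemma A_list_nth: "i \<le> k \<Longrightarrow> A_list A0 k ! i = A_seq A0 i"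
proof (induction k)
  case (Suc k)
  then show ?case
    by (cases "i \<le> k") (simp_all add: nth_append length_A_list A_seq_def le_Suc_eq)
qed (simp add: A_seq_def)

lemma A_seq_0: "A_seq A0 0 = A0"
  by (simp add: A_seq_def)

lemma A_seq_Suc: "A_seq A0 (Suc k) = rec_step (\<lambda>i. A_list A0 k ! i) k"
  by (simp add: A_seq_def nth_append length_A_list)

lemma has_fps_expansion_rec_step:
  assumes B: "\<And>i. i \<le> k \<Longrightarrow> B i has_fps_expansion G i" and G_0: "G 0 $ 0 = 0"
  shows "rec_step B k has_fps_expansion rec_step_fps G k"
proof -
  have "(\<lambda>z. \<Sum>(i, j) \<in> {(i, j). i + j = k + 1 \<and> i \<le> k \<and> j \<le> k}. B i z * B j z)
      has_fps_expansion pair_sum G k"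
    unfolding pair_sum_def case_prod_beta
    by (intro has_fps_expansion_sum has_fps_expansion_mult B) auto
  moreover have "(\<lambda>z. \<Sum>(j1, j2, j3) \<in> {(j1, j2, j3). j1 + j2 + j3 = k + 1 \<and> j1 \<le> k \<and> j2 \<le> k \<and> j3 \<le> k}.
      B j1 z * B j2 z * B j3 z) has_fps_expansion triple_sum G k"
    unfolding triple_sum_def case_prod_beta
    by (intro has_fps_expansion_sum has_fps_expansion_mult B) auto
  moreover have "(\<lambda>z. \<Sum>i\<le>k. B i z * euler_op (euler_op (B (k - i))) z
      - euler_op (B i) z * euler_op (B (k - i)) z) has_fps_expansion hirota_sum G k"
    unfolding hirota_sum_def
    by (intro has_fps_expansion_sum has_fps_expansion_diff has_fps_expansion_mult
        has_fps_expansion_euler_op B) auto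
  moreover have "(\<lambda>z. (1 + B 0 z) / (2 * B 0 z - 1)) has_fps_expansion (1 + G 0) / (2 * G 0 - 1)"
    using G_0 by (intro has_fps_expansion_divide' has_fps_expansion_add has_fps_expansion_diff
        has_fps_expansion_mult has_fps_expansion_1 has_fps_expansion_numeral B) auto
  ultimately show ?thesis
    unfolding rec_step_def rec_step_fps_def
    by (intro has_fps_expansion_mult has_fps_expansion_add has_fps_expansion_diff
        has_fps_expansion_euler_op has_fps_expansion_numeral has_fps_expansion_fps_X B) auto
qed

definition A_fps :: "(complex \<Rightarrow> complex) \<Rightarrow> nat \<Rightarrow> complex fps" where
  "A_fps A0 k = fps_expansion (A_seq A0 k) 0"

lemma A_fps_0: "A0 has_fps_expansion F0 \<Longrightarrow> A_fps A0 0 = F0"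
  by (simp add: A_fps_def A_seq_0 fps_expansion_eqI)

lemma A_seq_has_fps_expansion:
  assumes "A0 has_fps_expansion F0" "F0 $ 0 = 0"
  shows "A_seq A0 k has_fps_expansion A_fps A0 k"
proof (induction k rule: less_induct)
  case (less k)
  show ?case
  proof (cases k)
    case 0
    then show ?thesis using assms(1) by (simp add: A_fps_0 A_seq_0)
  next
    case (Suc k')
    have "A_seq A0 k has_fps_expansion rec_step_fps (A_fps A0) k'"
      unfolding Suc A_seq_Suc
      by (rule has_fps_expansion_rec_step) (use less Suc assms A_fps_0 in \<open>auto simp: A_list_nth\<close>)
    then show ?thesis by (simp add: A_fps_def fps_expansion_eqI)
  qed
qed

lemma A_fps_Suc:
  assumes "A0 has_fps_expansion F0" "F0 $ 0 = 0"
  shows "A_fps A0 (Suc k) = rec_step_fps (A_fps A0) k"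
proof -
  have "A_seq A0 (Suc k) has_fps_expansion rec_step_fps (A_fps A0) k"
    unfolding A_seq_Suc
    using A_seq_has_fps_expansion[OF assms] assms
    by (intro has_fps_expansion_rec_step) (auto simp: A_list_nth A_fps_0)
  then show ?thesis by (simp add: A_fps_def fps_expansion_eqI)
qed

lemma fps_expansion_ternary_equation:
  fixes f :: "complex \<Rightarrow> complex"
  assumes "r > 0" "f holomorphic_on ball 0 r" "\<And>z. z \<in> ball 0 r \<Longrightarrow> z * (1 + f z) ^ 3 = f z"
  shows "fps_expansion f 0 = fps_X * (1 + fps_expansion f 0) ^ 3"
proof -
  have f: "f has_fps_expansion fps_expansion f 0"
    using assms(1,2) by (intro has_fps_expansion_fps_expansion) auto
  have "eventually (\<lambda>z. z \<in> ball 0 r) (nhds 0)"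
    using assms(1) by (intro eventually_nhds_in_open) auto
  then have eq: "eventually (\<lambda>z. z * (1 + f z) ^ 3 = f z) (nhds 0)"
    by eventually_elim (rule assms(3))
  have "(\<lambda>z. z * (1 + f z) ^ 3) has_fps_expansion fps_X * (1 + fps_expansion f 0) ^ 3"
    by (intro has_fps_expansion_mult has_fps_expansion_fps_X has_fps_expansion_power
        has_fps_expansion_add has_fps_expansion_1 f)
  then have "f has_fps_expansion fps_X * (1 + fps_expansion f 0) ^ 3"
    using has_fps_expansion_cong[OF eq refl] by simp
  then show ?thesis by (rule fps_expansion_eqI)
qed

theorem proposition3:
  fixes A0 :: "complex \<Rightarrow> complex" and r :: real
  assumes "r > 0"
    and "A0 holomorphic_on ball 0 r"
    and "A0 0 = 0"
    and "\<And>z. z \<in> ball 0 r \<Longrightarrow> z * (1 + A0 z) ^ 3 = A0 z"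
  shows "\<forall>k. A_seq A0 k 0 = 0
            \<and> (\<forall>n\<ge>1. \<exists>m::nat. m > 0 \<and> taylor_coeff (A_seq A0 k) n = (-1) ^ k * of_nat m)
            \<and> taylor_coeff (A_seq A0 k) 1 = (-1) ^ k"
proof
  fix k
  define F0 where "F0 = fps_expansion A0 0"
  have A0: "A0 has_fps_expansion F0"
    unfolding F0_def using assms(1,2) by (intro has_fps_expansion_fps_expansion) auto
  have F0: "F0 = fps_X * (1 + F0) ^ 3"
    unfolding F0_def using assms(1,2,4) by (rule fps_expansion_ternary_equation)
  have F0_0: "F0 $ 0 = 0" by (subst F0) simp
  have A_k: "A_seq A0 k has_fps_expansion A_fps A0 k"
    by (rule A_seq_has_fps_expansion[OF A0 F0_0])
  define B where "B = fps_const ((-1) ^ k) * A_fps A0 k"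
  have B: "positive_series B" "B $ 1 = 1"
    using rec_step_fps_alternating_positive[of "A_fps A0" k] A_fps_Suc[OF A0 F0_0] F0
    by (auto simp: A_fps_0[OF A0] B_def)
  have coeff: "taylor_coeff (A_seq A0 k) n = (-1) ^ k * B $ n" for n
    by (simp add: taylor_coeff_def fps_nth_fps_expansion[OF A_k] B_def)
  have "A_seq A0 k 0 = 0"
    using has_fps_expansion_imp_0_eq_fps_nth_0[OF A_k] coeff[of 0] B(1)
    by (simp add: taylor_coeff_def positive_series_def)
  with B coeff show "A_seq A0 k 0 = 0
            \<and> (\<forall>n\<ge>1. \<exists>m::nat. m > 0 \<and> taylor_coeff (A_seq A0 k) n = (-1) ^ k * of_nat m)
            \<and> taylor_coeff (A_seq A0 k) 1 = (-1) ^ k"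
    by (auto simp: positive_series_def)
qed

end
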